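(* Let $\varphi:\mathbb{R}^n\to\mathbb{R}$ be twice continuously differentiable and convex. Then $\det(\nabla^2\varphi(x))=0$ for all $x\in\mathbb{R}^n$ if and only if there exist $v\in\mathbb{R}^n\setminus\{0\}$ and $c\in\mathbb{R}$ such that $\langle v,\nabla\varphi(x)\rangle=c$ for all $x\in\mathbb{R}^n$. *)

theory Defs
  imports "HOL-Analysis.Analysis"
begin

definition grad :: "(real^'n \<Rightarrow> real) \<Rightarrow> real^'n \<Rightarrow> real^'n" where
  "grad f x = (\<chi> i. frechet_derivative f (at x) (axis i 1))"

definition hess :: "(real^'n \<Rightarrow> real) \<Rightarrow> real^'n \<Rightarrow> real^'n^'n" where
  "hess f x = matrix (frechet_derivative (grad f) (at x))"

definition C2 :: "(real^'n \<Rightarrow> real) \<Rightarrow> bool" where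
  "C2 f \<longleftrightarrow> (\<forall>x. f differentiable at x) \<and> (\<forall>x. grad f differentiable at x)
            \<and> continuous_on UNIV (hess f)"

end

theory Submission
  imports Defs
begin

text \<open>
  If \<open>v \<bullet> grad \<phi>\<close> is constant, differentiating shows that \<open>v\<close> lies in the left kernel of the
  Hessian. Conversely, if the Hessian is everywhere singular, Sard's theorem for the gradient map
  shows that its range has empty interior. Convexity makes this range almost convex: if \<open>p\<close> lies
  in the interior of the convex hull of finitely many gradient values \<open>q = grad \<phi> x\<^sub>q\<close>, the
  tangent-plane inequalities at the \<open>x\<^sub>q\<close> make \<open>\<phi> y - p \<bullet> y\<close> grow linearly in \<open>norm y\<close>, so it
  attains a minimum, where \<open>grad \<phi> = p\<close>. A set with empty interior that contains the interior of
  the convex hull of each finite subset has affine dimension below \<open>n\<close> (otherwise it contains an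
  affinely independent \<open>(n+1)\<close>-set), hence lies in a hyperplane \<open>{x. v \<bullet> x = c}\<close>.
\<close>

lemma has_derivative_grad:
  assumes "f differentiable at x"
  shows "(f has_derivative (\<lambda>h. grad f x \<bullet> h)) (at x)"
proof -
  let ?D = "frechet_derivative f (at x)"
  have D: "(f has_derivative ?D) (at x)"
    using assms frechet_derivative_works by blast
  then have "linear ?D"
    by (rule has_derivative_linear)
  then have "?D h = grad f x \<bullet> h" for h
    by (subst basis_expansion[of h, symmetric])
      (simp add: linear_sum linear_scale scalar_mult_eq_scaleR grad_def inner_vec_def mult.commute)
  then have "?D = (\<lambda>h. grad f x \<bullet> h)"
    by (simp add: fun_eq_iff)
  with D show ?thesis
    by simp
qed

lemma has_derivative_hess:
  assumes "grad f differentiable at x"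
  shows "(grad f has_derivative (\<lambda>h. hess f x *v h)) (at x)"
proof -
  let ?D = "frechet_derivative (grad f) (at x)"
  have D: "(grad f has_derivative ?D) (at x)"
    using assms frechet_derivative_works by blast
  then have "linear ?D"
    by (rule has_derivative_linear)
  with D show ?thesis
    by (simp add: hess_def matrix_works)
qed

lemma convex_on_imp_above_tangent_plane:
  fixes f :: "'a::real_normed_vector \<Rightarrow> real"
  assumes convex: "convex_on UNIV f" and deriv: "(f has_derivative f') (at x)"
  shows "f x + f' (y - x) \<le> f y"
proof -
  define h where "h t = f (x + t *\<^sub>R (y - x))" for t :: real
  have "convex_on UNIV h"
  proof (rule convex_onI)
    fix u s t :: real
    assume "0 < u" "u < 1"
    have "x + ((1 - u) *\<^sub>R s + u *\<^sub>R t) *\<^sub>R (y - x)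
        = (1 - u) *\<^sub>R (x + s *\<^sub>R (y - x)) + u *\<^sub>R (x + t *\<^sub>R (y - x))"
      by (simp add: algebra_simps)
    then show "h ((1 - u) *\<^sub>R s + u *\<^sub>R t) \<le> (1 - u) * h s + u * h t"
      unfolding h_def using convex_onD[OF convex, of u] \<open>0 < u\<close> \<open>u < 1\<close> by simp
  qed simp
  moreover have "(h has_field_derivative f' (y - x)) (at 0 within UNIV)"
  proof -
    have "((\<lambda>t. x + t *\<^sub>R (y - x)) has_derivative (\<lambda>t. t *\<^sub>R (y - x))) (at 0)"
      by (auto intro!: derivative_eq_intros)
    moreover have "(f has_derivative f') (at (x + 0 *\<^sub>R (y - x)))"
      using deriv by simp
    ultimately have "(h has_derivative (\<lambda>t. f' (t *\<^sub>R (y - x)))) (at 0)"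
      unfolding h_def using diff_chain_at by (fastforce simp: o_def)
    moreover have "(\<lambda>t. f' (t *\<^sub>R (y - x))) = (*) (f' (y - x))"
      using has_derivative_linear[OF deriv] by (simp add: fun_eq_iff linear_scale)
    ultimately show ?thesis
      by (simp add: has_field_derivative_def)
  qed
  ultimately have "h 1 - h 0 \<ge> f' (y - x) * (1 - 0)"
    by (intro convex_on_imp_above_tangent) auto
  then show ?thesis
    by (simp add: h_def)
qed

lemma cball_subset_convex_hull_imp_inner_ge:
  fixes F :: "'a::real_inner set"
  assumes F: "finite F" and r: "0 < r" "cball p r \<subseteq> convex hull F"
  obtains q where "q \<in> F" "r * norm y \<le> (q - p) \<bullet> y"
proof (cases "y = 0")
  case True
  have "p \<in> convex hull F"
    using r by auto
  then show ?thesis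
    using True that by fastforce
next
  case False
  define z where "z = p + (r / norm y) *\<^sub>R y"
  have "z \<in> convex hull F"
    using r False by (auto simp: z_def dist_norm)
  moreover have "convex hull F \<subseteq> {w. y \<bullet> w \<le> Max ((\<bullet>) y ` F)}"
    using F by (intro hull_minimal) (auto simp: convex_halfspace_le)
  ultimately have "y \<bullet> z \<le> Max ((\<bullet>) y ` F)"
    by blast
  moreover have "F \<noteq> {}"
    using \<open>z \<in> convex hull F\<close> by auto
  then have "Max ((\<bullet>) y ` F) \<in> (\<bullet>) y ` F"
    using F by (intro Max_in) auto
  then obtain q where "q \<in> F" "Max ((\<bullet>) y ` F) = y \<bullet> q"
    by blast
  moreover have "y \<bullet> z = y \<bullet> p + r * norm y"
    using False by (simp add: z_def inner_add_right dot_square_norm power2_eq_square)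
  ultimately have "r * norm y \<le> (q - p) \<bullet> y"
    by (simp add: inner_diff_left inner_diff_right inner_commute)
  with \<open>q \<in> F\<close> that show ?thesis
    by blast
qed

lemma continuous_linear_growth_attains_min:
  fixes \<psi> :: "'a::euclidean_space \<Rightarrow> real"
  assumes cont: "continuous_on UNIV \<psi>" and r: "0 < r"
    and growth: "\<And>y. A + r * norm y \<le> \<psi> y"
  obtains x where "\<And>y. \<psi> x \<le> \<psi> y"
proof -
  define R where "R = (\<psi> 0 - A) / r"
  have "0 \<le> R"
    using growth[of 0] r by (simp add: R_def)
  then have "\<exists>x\<in>cball 0 R. \<forall>y\<in>cball 0 R. \<psi> x \<le> \<psi> y"
    by (intro continuous_attains_inf continuous_on_subset[OF cont]) auto
  then obtain x where x: "\<And>y. y \<in> cball 0 R \<Longrightarrow> \<psi> x \<le> \<psi> y"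
    by blast
  have "\<psi> x \<le> \<psi> y" for y
  proof (cases "norm y \<le> R")
    case False
    then have "\<psi> 0 < \<psi> y"
      using growth[of y] r by (simp add: R_def field_simps)
    with x[of 0] \<open>0 \<le> R\<close> show ?thesis
      by simp
  qed (use x in simp)
  with that show ?thesis
    by blast
qed

lemma interior_convex_hull_subset_range_gradient:
  fixes f :: "'a::euclidean_space \<Rightarrow> real" and G :: "'a \<Rightarrow> 'a"
  assumes convex: "convex_on UNIV f"
    and deriv: "\<And>x. (f has_derivative (\<lambda>h. G x \<bullet> h)) (at x)"
    and F: "finite F" "F \<subseteq> range G"
  shows "interior (convex hull F) \<subseteq> range G"
proof
  fix p
  assume "p \<in> interior (convex hull F)"
  then obtain r where r: "0 < r" "cball p r \<subseteq> convex hull F"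
    by (meson open_contains_cball_eq open_interior interior_subset subset_trans)
  define \<psi> where "\<psi> y = f y - p \<bullet> y" for y
  define A where "A = Min ((\<lambda>q. f (inv G q) - q \<bullet> inv G q) ` F)"
  have growth: "A + r * norm y \<le> \<psi> y" for y
  proof -
    obtain q where q: "q \<in> F" "r * norm y \<le> (q - p) \<bullet> y"
      using cball_subset_convex_hull_imp_inner_ge[OF F(1) r] .
    have "G (inv G q) = q"
      using q(1) F(2) by (blast intro: f_inv_into_f)
    then have "f (inv G q) + q \<bullet> (y - inv G q) \<le> f y"
      using convex_on_imp_above_tangent_plane[OF convex deriv] by metis
    moreover have "A \<le> f (inv G q) - q \<bullet> inv G q"
      unfolding A_def using F(1) q(1) by simp
    ultimately show ?thesis
      using q(2) by (simp add: \<psi>_def inner_diff_right inner_diff_left inner_commute)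
  qed
  have "continuous_on UNIV \<psi>"
    unfolding \<psi>_def using deriv
    by (intro continuous_intros has_derivative_continuous_on) auto
  then obtain x where min: "\<And>y. \<psi> x \<le> \<psi> y"
    using continuous_linear_growth_attains_min r(1) growth by blast
  have "(\<psi> has_derivative (\<lambda>h. (G x - p) \<bullet> h)) (at x)"
    unfolding \<psi>_def inner_diff_left
    by (intro has_derivative_diff deriv has_derivative_inner_right has_derivative_ident)
  then have "(\<lambda>h. (G x - p) \<bullet> h) = (\<lambda>h. 0)"
    using min by (intro differential_zero_maxmin[of x UNIV]) auto
  then have "(G x - p) \<bullet> (G x - p) = 0"
    by metis
  then show "p \<in> range G"
    by (metis inner_eq_zero_iff right_minus_eq rangeI)
qed

lemma subset_hyperplane_if_interior_empty:
  fixes S :: "'a::euclidean_space set"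
  assumes empty: "interior S = {}"
    and hulls: "\<And>F. finite F \<Longrightarrow> F \<subseteq> S \<Longrightarrow> interior (convex hull F) \<subseteq> S"
  obtains a b where "a \<noteq> 0" "S \<subseteq> {x. a \<bullet> x = b}"
proof (cases "aff_dim S < DIM('a)")
  case True
  with aff_lowdim_subset_hyperplane that show ?thesis
    by blast
next
  case False
  obtain B where B: "B \<subseteq> S" "\<not> affine_dependent B" "affine hull S = affine hull B"
    using affine_basis_exists by blast
  have "aff_dim B = DIM('a)"
    using False aff_dim_le_DIM[of S] B(3) aff_dim_affine_hull[of S] by auto
  then have "card B = Suc DIM('a)"
    using aff_dim_affine_independent[OF B(2)] by simp
  then have "interior (convex hull B) \<noteq> {}"
    using interior_convex_hull_eq_empty B(2) by blast
  moreover have "interior (convex hull B) \<subseteq> interior S"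
    using hulls[OF aff_independent_finite[OF B(2)] B(1)] by (simp add: interior_maximal)
  ultimately show ?thesis
    using empty by blast
qed

lemma det_eq_0_if_left_kernel:
  fixes H :: "real^'n^'n"
  assumes "v \<noteq> 0" and "\<And>h. v \<bullet> (H *v h) = 0"
  shows "det H = 0"
proof (rule ccontr)
  assume "det H \<noteq> 0"
  then have "surj ((*v) H)"
    by (simp add: invertible_det_nz [symmetric] invertible_right_inverse
        matrix_right_invertible_surjective)
  then obtain w where "H *v w = v"
    by (metis surjD)
  then have "v \<bullet> v = 0"
    using assms(2) by metis
  with assms(1) show False
    by simp
qed

lemma det_hess_eq_0_if_inner_grad_const:
  assumes "grad f differentiable at x" and "v \<noteq> 0" and "\<And>y. v \<bullet> grad f y = c"
  shows "det (hess f x) = 0"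
proof (rule det_eq_0_if_left_kernel[OF \<open>v \<noteq> 0\<close>])
  have "((\<lambda>y. v \<bullet> grad f y) has_derivative (\<lambda>h. v \<bullet> (hess f x *v h))) (at x)"
    using has_derivative_hess[OF assms(1)] by (rule has_derivative_inner_right)
  moreover have "((\<lambda>y. v \<bullet> grad f y) has_derivative (\<lambda>h. 0)) (at x)"
    using assms(3) by simp
  ultimately have "(\<lambda>h. v \<bullet> (hess f x *v h)) = (\<lambda>h. 0)"
    by (rule has_derivative_unique)
  then show "v \<bullet> (hess f x *v h) = 0" for h
    by metis
qed

lemma negligible_range_if_det_eq_0:
  fixes g :: "real^'m::{finite,wellorder} \<Rightarrow> real^'m::{finite,wellorder}"
  assumes "\<And>x. (g has_derivative g' x) (at x)" and "\<And>x. det (matrix (g' x)) = 0"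
  shows "negligible (range g)"
  using assms by (intro baby_Sard) (auto simp: det_eq_0_rank)

lemma has_derivative_map_fst:
  assumes "(g has_derivative g') (at (fst z))"
  shows "((\<lambda>z. (g (fst z), snd z)) has_derivative (\<lambda>h. (g' (fst h), snd h))) (at z)"
  using diff_chain_at[OF has_derivative_fst[OF has_derivative_ident] assms]
  by (auto intro!: has_derivative_Pair has_derivative_snd simp: o_def)

lemma interior_range_eq_empty_if_det_eq_0:
  fixes g :: "real^'n \<Rightarrow> real^'n"
  assumes deriv: "\<And>x. (g has_derivative (\<lambda>h. H x *v h)) (at x)"
    and det: "\<And>x. det (H x) = 0"
  shows "interior (range g) = {}"
proof -
  \<comment> \<open>The library's Sard theorem needs a well-ordered index type, such as \<open>'n bit0\<close>.
    Identifying \<open>\<real>\<^sup>n \<times> \<real>\<^sup>n\<close> with \<open>\<real>^('n bit0)\<close>, the map \<open>g \<times> id\<close> is everywhere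
    singular, so its range is negligible; yet it contains the open set \<open>interior (range g) \<times> \<real>\<^sup>n\<close>.\<close>
  have "DIM((real^'n) \<times> (real^'n)) = DIM(real^('n bit0))"
    by simp
  then obtain f :: "(real^'n) \<times> (real^'n) \<Rightarrow> real^('n bit0)" and e
    where iso: "linear f" "linear e" "\<And>z. e (f z) = z" "\<And>y. f (e y) = y"
    by (rule isomorphisms_UNIV_UNIV) (rule that)
  define G where "G = f \<circ> ((\<lambda>z. (g (fst z), snd z)) \<circ> e)"
  define G' where "G' y = f \<circ> ((\<lambda>h. (H (fst (e y)) *v fst h, snd h)) \<circ> e)" for y
  have G': "(G has_derivative G' y) (at y)" for y
    unfolding G_def G'_def
    by (intro diff_chain_at[OF diff_chain_at] linear_imp_has_derivative iso has_derivative_map_fst deriv)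
  have "det (matrix (G' y)) = 0" for y
  proof -
    have "\<not> inj ((*v) (H (fst (e y))))"
      using det_nz_iff_inj[OF matrix_vector_mul_linear, of "H (fst (e y))"] det
      by (simp add: matrix_of_matrix_vector_mul)
    then obtain a b where "a \<noteq> b" "H (fst (e y)) *v a = H (fst (e y)) *v b"
      by (auto simp: inj_def)
    then have "G' y (f (a, 0)) = G' y (f (b, 0))" and "f (a, 0) \<noteq> f (b, 0)"
      by (simp add: G'_def iso(3), metis iso(3) prod.inject)
    then have "\<not> inj (G' y)"
      by (auto simp: inj_def)
    then show ?thesis
      using det_nz_iff_inj[OF has_derivative_linear[OF G']] by blast
  qed
  with G' have "negligible (range G)"
    by (rule negligible_range_if_det_eq_0)
  show ?thesis
  proof (rule ccontr)
    assume "interior (range g) \<noteq> {}"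
    moreover have "open (f ` (interior (range g) \<times> UNIV))"
      using iso(1) surjI[of f e, OF iso(4)] by (intro open_surjective_linear_image open_Times) auto
    moreover have "f ` (interior (range g) \<times> UNIV) \<subseteq> range G"
    proof clarify
      fix q u assume "q \<in> interior (range g)"
      then obtain x where "q = g x"
        using interior_subset by blast
      then have "f (q, u) = G (f (x, u))"
        by (simp add: G_def iso(3))
      then show "f (q, u) \<in> range G"
        by blast
    qed
    ultimately show False
      using negligible_subset[OF \<open>negligible (range G)\<close>] open_not_negligible by blast
  qed
qed

theorem proposition4p9:
  fixes \<phi> :: "real^'n \<Rightarrow> real"
  assumes "C2 \<phi>" and "convex_on UNIV \<phi>"
  shows "(\<forall>x. det (hess \<phi> x) = 0) \<longleftrightarrow>
         (\<exists>v c. v \<noteq> 0 \<and> (\<forall>x. v \<bullet> grad \<phi> x = c))"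
proof -
  from assms(1) have diff: "\<And>x. \<phi> differentiable at x"
    and diff_grad: "\<And>x. grad \<phi> differentiable at x"
    by (auto simp: C2_def)
  show ?thesis
  proof
    assume "\<forall>x. det (hess \<phi> x) = 0"
    then have "interior (range (grad \<phi>)) = {}"
      using has_derivative_hess[OF diff_grad] by (intro interior_range_eq_empty_if_det_eq_0) auto
    moreover have "interior (convex hull F) \<subseteq> range (grad \<phi>)"
      if "finite F" "F \<subseteq> range (grad \<phi>)" for F
      using assms(2) has_derivative_grad[OF diff] that
      by (rule interior_convex_hull_subset_range_gradient)
    ultimately obtain v c where "v \<noteq> 0" "range (grad \<phi>) \<subseteq> {x. v \<bullet> x = c}"
      by (rule subset_hyperplane_if_interior_empty)
    then show "\<exists>v c. v \<noteq> 0 \<and> (\<forall>x. v \<bullet> grad \<phi> x = c)"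
      by blast
  next
    assume "\<exists>v c. v \<noteq> 0 \<and> (\<forall>x. v \<bullet> grad \<phi> x = c)"
    then show "\<forall>x. det (hess \<phi> x) = 0"
      using det_hess_eq_0_if_inner_grad_const[OF diff_grad] by blast
  qed
qed

end
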